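(* Call a positive integer $d$ admissible if either $d=1$, or $d$ can be written as $d=f\cdot\prod_{i=1}^{m}p_i^{2k_i}$ with $m\ge 1$, distinct primes $p_1<p_2<\dots<p_m$, integers $k_i\ge 0$, where $f=2$ if $p_1=2$ and $f=1$ if $p_1>2$, and where every $p_i$ divides $d$ (i.e. $k_i\ge 1$ for every $p_i>2$). For $d=1$ put $f=1$ and $s=1$; otherwise put $s=\prod_{i=1}^m p_i^{k_i}$ (so $d=f s^2$). Let $d$ be admissible and let $r$ be a positive integer such that (1) $r\ge \lceil \sqrt{f\,d/2}\,\rceil$, and (2) if $d>1$, then no prime divisor of $d$ divides $r$. Put $n=s\cdot r$ and $$a=2n+d=2sr+f s^2,\qquad b=2n+\frac{2n^2}{d}=2sr+\frac{2r^2}{f},\qquad c=b+d=2sr+\frac{2r^2}{f}+f s^2.$$ Then $(a,b,c)$ is an IDPT. Conversely, every IDPT $(a,b,c)$ arises in this way from some admissible $d$ and some positive integer $r$ satisfying (1) and (2) (namely with $d=c-b$).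
   Context: A Diophantine Pythagorean Triangle (DPT) is a triple $(a,b,c)$ of positive integers with $a<b<c$ and $a^2+b^2=c^2$. An Irreducible Diophantine Pythagorean Triangle (IDPT) is a DPT with $\gcd(a,b,c)=1$. $\lceil x\rceil$ denotes the smallest integer $\ge x$. *)

theory Defs
  imports Complex_Main "HOL-Computational_Algebra.Primes"
begin

definition dpt :: "nat \<Rightarrow> nat \<Rightarrow> nat \<Rightarrow> bool" where
  "dpt a b c \<longleftrightarrow> 0 < a \<and> a < b \<and> b < c \<and> a^2 + b^2 = c^2"

definition idpt :: "nat \<Rightarrow> nat \<Rightarrow> nat \<Rightarrow> bool" where
  "idpt a b c \<longleftrightarrow> dpt a b c \<and> gcd (gcd a b) c = 1"

definition admissible_rep :: "nat \<Rightarrow> nat \<Rightarrow> nat \<Rightarrow> bool" where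
  "admissible_rep d f s \<longleftrightarrow>
     (d = 1 \<and> f = 1 \<and> s = 1) \<or>
     (\<exists>ps ks :: nat list.
        length ps \<ge> 1 \<and> length ks = length ps \<and>
        sorted_wrt (<) ps \<and> (\<forall>p\<in>set ps. prime p) \<and>
        f = (if hd ps = 2 then 2 else 1) \<and>
        d = f * (\<Prod>i<length ps. (ps!i) ^ (2 * (ks!i))) \<and>
        (\<forall>i<length ps. ps!i dvd d) \<and>
        s = (\<Prod>i<length ps. (ps!i) ^ (ks!i)))"

definition admissible :: "nat \<Rightarrow> bool" where
  "admissible d \<longleftrightarrow> (\<exists>f s. admissible_rep d f s)"

end

theory Submission
  imports Defs "HOL-Computational_Algebra.Nth_Powers"
begin

(* Put d = c - b. Then a^2 = d (c + b), and primitivity makes d coprime to b. If d is odd, d and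
   c + b are coprime, hence d = s^2, c + b = t^2 with t = s + 2r; if d is even, d/2 and (c + b)/2
   are coprime, hence d = 2 s^2, c + b = 2 t^2 with t = s + r. In both cases the formulas for a and
   b follow, condition (1) of the statement amounts to a < b and condition (2) to primitivity.
   Admissibility of d says precisely that d = s^2 with s odd (f = 1) or d = 2 s^2 (f = 2). *)

lemma int_ge_ceiling_sqrt_half_iff:
  "int r \<ge> \<lceil>sqrt (real x / 2)\<rceil> \<longleftrightarrow> x \<le> 2 * r^2"
proof -
  have "int r \<ge> \<lceil>sqrt (real x / 2)\<rceil> \<longleftrightarrow> sqrt (real x / 2) \<le> sqrt ((real r)^2)"
    by (simp add: ceiling_le_iff)
  also have "\<dots> \<longleftrightarrow> real x / 2 \<le> (real r)^2"
    by (rule real_sqrt_le_iff)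
  also have "\<dots> \<longleftrightarrow> real x \<le> real (2 * r^2)"
    by (auto simp: field_simps)
  also have "\<dots> \<longleftrightarrow> x \<le> 2 * r^2"
    by (rule of_nat_le_iff)
  finally show ?thesis .
qed

lemma coprime_iff_no_common_prime_nat:
  fixes x y :: nat
  shows "coprime x y \<longleftrightarrow> (\<forall>p. prime p \<and> p dvd x \<longrightarrow> \<not> p dvd y)"
proof
  assume "coprime x y"
  then show "\<forall>p. prime p \<and> p dvd x \<longrightarrow> \<not> p dvd y"
    using coprime_common_divisor_nat not_prime_1 by blast
next
  assume no_common: "\<forall>p. prime p \<and> p dvd x \<longrightarrow> \<not> p dvd y"
  show "coprime x y"
  proof (rule ccontr)
    assume "\<not> coprime x y"
    then obtain p where "prime p" "p dvd gcd x y"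
      using prime_factor_nat coprime_iff_gcd_eq_1 by blast
    then show False
      using no_common by auto
  qed
qed

lemma gcd_gcd_eq_1_iff_no_common_prime_nat:
  fixes a b c :: nat
  shows "gcd (gcd a b) c = 1 \<longleftrightarrow> (\<forall>p. prime p \<and> p dvd a \<and> p dvd b \<longrightarrow> \<not> p dvd c)"
  using coprime_iff_no_common_prime_nat[of "gcd a b" c] by (simp add: coprime_iff_gcd_eq_1)

lemma coprime_add_self_right_nat:
  "coprime (a :: nat) (a + b) \<longleftrightarrow> coprime a b"
  by (simp add: coprime_iff_gcd_eq_1)

lemma coprime_iff_prime_divisors_not_dvd:
  fixes d r :: nat
  assumes "0 < d"
  shows "(1 < d \<longrightarrow> (\<forall>p. prime p \<and> p dvd d \<longrightarrow> \<not> p dvd r)) \<longleftrightarrow> coprime d r"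
  using assms coprime_iff_no_common_prime_nat[of d r] by (cases "d = 1") auto

lemma coprime_mult_eq_square_nat:
  fixes x y a :: nat
  assumes "coprime x y" "x * y = a^2" "0 < x" "0 < y"
  obtains s t where "x = s^2" "y = t^2" "a = s * t" "coprime s t"
proof -
  have "is_nth_power 2 (x * y)"
    using assms(2) by (metis is_nth_power_def)
  then have "is_nth_power 2 x" "is_nth_power 2 y"
    using is_nth_power_mult_coprime_natD assms(1,3,4) by auto
  then obtain s t where st: "x = s^2" "y = t^2"
    by (auto simp: is_nth_power_def)
  with assms(2) have "a^2 = (s * t)^2"
    by (simp add: power_mult_distrib)
  then have "a = s * t"
    by (simp add: power_eq_iff_eq_base)
  moreover have "coprime s t"
    using assms(1) st by simp
  ultimately show thesis
    using that st by blast
qed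

subsection \<open>Admissible numbers\<close>

lemma sorted_primes_hd_eq_2_iff:
  fixes ps :: "nat list"
  assumes "sorted_wrt (<) ps" "\<forall>p\<in>set ps. prime p" "ps \<noteq> []"
  shows "hd ps = 2 \<longleftrightarrow> 2 \<in> set ps"
proof (cases ps)
  case (Cons q qs)
  have "q \<ge> 2"
    using assms(2) Cons prime_ge_2_nat by simp
  moreover have "q < 2" if "2 \<in> set qs"
    using assms(1) that Cons by simp
  ultimately show ?thesis
    using Cons by auto
qed (use assms(3) in simp)

lemma prod_lessThan_length_nth:
  assumes "distinct ps"
  shows "(\<Prod>i<length ps. g (ps!i)) = (\<Prod>p\<in>set ps. g p)"
proof -
  have "set ps = (!) ps ` {..<length ps}"
    by (auto simp: set_conv_nth)
  moreover have "inj_on ((!) ps) {..<length ps}"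
    using assms by (intro inj_on_nth) auto
  ultimately show ?thesis
    by (simp add: prod.reindex)
qed

lemma prod_power_double:
  "(\<Prod>i\<in>I. (p i :: nat) ^ (2 * k i)) = (\<Prod>i\<in>I. p i ^ k i)^2"
  by (simp only: power_even_eq prod_power_distrib)

lemma prod_multiplicity_superset:
  fixes s :: nat
  assumes "0 < s" "finite P" "\<forall>p\<in>P. prime p" "prime_factors s \<subseteq> P"
  shows "(\<Prod>p\<in>P. p ^ multiplicity p s) = s"
proof -
  have "(\<Prod>p\<in>P. p ^ multiplicity p s) = (\<Prod>p\<in>prime_factors s. p ^ multiplicity p s)"
    using assms by (intro prod.mono_neutral_right)
      (auto simp: in_prime_factors_iff not_dvd_imp_multiplicity_0)
  also have "\<dots> = s"
    using assms(1) by (simp add: prod_prime_factors)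
  finally show ?thesis .
qed

lemma admissible_rep_imp_square_form:
  assumes "admissible_rep d f s"
  shows "0 < s \<and> d = f * s^2 \<and> (f = 1 \<and> odd s \<or> f = 2)"
  using assms unfolding admissible_rep_def
proof (elim disjE exE conjE)
  fix ps ks :: "nat list"
  assume len: "length ps \<ge> 1" and sorted: "sorted_wrt (<) ps"
    and primes: "\<forall>p\<in>set ps. prime p" and f: "f = (if hd ps = 2 then 2 else 1)"
    and d: "d = f * (\<Prod>i<length ps. (ps!i) ^ (2 * (ks!i)))"
    and s: "s = (\<Prod>i<length ps. (ps!i) ^ (ks!i))"
  have prime_nth: "prime (ps!i)" if "i < length ps" for i
    using primes that by simp
  have "0 < s"
    unfolding s using prime_nth by (intro prod_pos) (simp add: prime_gt_0_nat)
  moreover have "d = f * s^2"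
    using d s by (simp add: prod_power_double)
  moreover have "odd s" if "hd ps \<noteq> 2"
  proof
    assume "even s"
    then obtain i where "i < length ps" "even (ps!i)"
      unfolding s by (auto simp: even_prod_iff)
    then have "ps!i = 2"
      using prime_nth by (metis prime_odd_nat prime_ge_2_nat le_neq_implies_less)
    then have "2 \<in> set ps"
      using \<open>i < length ps\<close> nth_mem by metis
    then show False
      using that sorted_primes_hd_eq_2_iff[OF sorted primes] len by (cases ps) auto
  qed
  ultimately show ?thesis
    using f by auto
qed simp

lemma admissible_rep_of_prime_superset:
  fixes s :: nat and P :: "nat set"
  assumes "0 < s" "finite P" "P \<noteq> {}" "\<forall>p\<in>P. prime p" "prime_factors s \<subseteq> P"
    and f: "f = (if 2 \<in> P then 2 else 1)" and dvd: "\<forall>p\<in>P. p dvd f * s^2"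
  shows "admissible_rep (f * s^2) f s"
proof -
  define ps where "ps = sorted_list_of_set P"
  define ks where "ks = map (\<lambda>p. multiplicity p s) ps"
  have ps: "set ps = P" "distinct ps" "sorted_wrt (<) ps" "ps \<noteq> []"
    using assms(2,3) by (auto simp: ps_def)
  have s: "(\<Prod>i<length ps. (ps!i) ^ (ks!i)) = s"
    using prod_lessThan_length_nth[OF ps(2), of "\<lambda>p. p ^ multiplicity p s"]
      prod_multiplicity_superset[OF assms(1,2,4,5)] ps(1) by (simp add: ks_def)
  then have s2: "(\<Prod>i<length ps. (ps!i) ^ (2 * (ks!i))) = s^2"
    by (simp only: prod_power_double)
  have hd: "hd ps = 2 \<longleftrightarrow> 2 \<in> P"
    using sorted_primes_hd_eq_2_iff[OF ps(3)] ps(1,4) assms(4) by simp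
  show ?thesis
    unfolding admissible_rep_def
  proof (rule disjI2, rule exI[of _ ps], rule exI[of _ ks], intro conjI)
    show "length ps \<ge> 1"
      using ps(4) by (cases ps) auto
    show "\<forall>i<length ps. ps!i dvd f * s^2"
      using dvd ps(1) nth_mem by blast
    show "length ks = length ps"
      by (simp add: ks_def)
  qed (use ps(1,3) assms(4) f hd s s2 in simp_all)
qed

lemma admissible_rep_iff:
  "admissible_rep d f s \<longleftrightarrow> 0 < s \<and> d = f * s^2 \<and> (f = 1 \<and> odd s \<or> f = 2)"
proof
  assume "0 < s \<and> d = f * s^2 \<and> (f = 1 \<and> odd s \<or> f = 2)"
  then have s: "0 < s" "d = f * s^2" and "f = 1 \<and> odd s \<or> f = 2"
    by auto
  have factor_dvd: "p dvd f * s^2" if "p \<in> prime_factors s" for p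
    using that s(1) by (simp add: in_prime_factors_iff power2_eq_square)
  from \<open>f = 1 \<and> odd s \<or> f = 2\<close> consider "f = 1" "s = 1" | "f = 1" "odd s" "s \<noteq> 1" | "f = 2"
    by blast
  then show "admissible_rep d f s"
  proof cases
    case 1
    then show ?thesis
      using s(2) by (simp add: admissible_rep_def)
  next
    case 2
    obtain p where "prime p" "p dvd s"
      using prime_factor_nat \<open>s \<noteq> 1\<close> by blast
    then have "prime_factors s \<noteq> {}"
      using s(1) in_prime_factors_iff by blast
    moreover have "2 \<notin> prime_factors s"
      using \<open>odd s\<close> by (simp add: in_prime_factors_iff)
    ultimately show ?thesis
      using admissible_rep_of_prime_superset[of s "prime_factors s" f] s 2 factor_dvd
      by (simp add: in_prime_factors_iff)
  next
    case 3
    have "p dvd f * s^2" if "p \<in> insert 2 (prime_factors s)" for p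
      using that factor_dvd 3 by auto
    then show ?thesis
      using admissible_rep_of_prime_superset[of s "insert 2 (prime_factors s)" f] s 3
      by (auto simp: in_prime_factors_iff)
  qed
qed (rule admissible_rep_imp_square_form)

subsection \<open>The two families of primitive triples\<close>

lemma idpt_odd_family:
  fixes s r :: nat
  assumes "odd s" "coprime s r" "s^2 < 2 * r^2"
  shows "idpt (2 * (s * r) + s^2) (2 * (s * r) + 2 * r^2) (2 * (s * r) + 2 * r^2 + s^2)"
  unfolding idpt_def dpt_def gcd_gcd_eq_1_iff_no_common_prime_nat
proof (intro conjI allI impI notI)
  have "0 < s"
    using assms(1) by (cases s) auto
  then show "0 < 2 * (s * r) + s^2" "2 * (s * r) + 2 * r^2 < 2 * (s * r) + 2 * r^2 + s^2"
    by simp_all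
  show "2 * (s * r) + s^2 < 2 * (s * r) + 2 * r^2"
    using assms(3) by simp
  show "(2 * (s * r) + s^2)^2 + (2 * (s * r) + 2 * r^2)^2 = (2 * (s * r) + 2 * r^2 + s^2)^2"
    by (simp add: power2_eq_square algebra_simps)
next
  fix p :: nat
  assume p: "prime p \<and> p dvd 2 * (s * r) + s^2 \<and> p dvd 2 * (s * r) + 2 * r^2"
    and "p dvd 2 * (s * r) + 2 * r^2 + s^2"
  then have "p dvd s^2"
    by (simp add: dvd_add_right_iff)
  then have "p dvd s" "p \<noteq> 2"
    using p assms(1) prime_dvd_power by auto
  then have "p dvd 2 * r^2"
    using p by (simp add: dvd_add_right_iff)
  then have "p dvd r"
    using p \<open>p \<noteq> 2\<close> by (metis prime_dvd_mult_iff prime_dvd_power primes_dvd_imp_eq two_is_prime_nat)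
  then show False
    using \<open>p dvd s\<close> p assms(2) coprime_iff_no_common_prime_nat by blast
qed

lemma idpt_even_family:
  fixes s r :: nat
  assumes "0 < s" "odd r" "coprime s r" "2 * s^2 < r^2"
  shows "idpt (2 * (s * r) + 2 * s^2) (2 * (s * r) + r^2) (2 * (s * r) + r^2 + 2 * s^2)"
  unfolding idpt_def dpt_def gcd_gcd_eq_1_iff_no_common_prime_nat
proof (intro conjI allI impI notI)
  show "0 < 2 * (s * r) + 2 * s^2" "2 * (s * r) + r^2 < 2 * (s * r) + r^2 + 2 * s^2"
    using assms(1) by simp_all
  show "2 * (s * r) + 2 * s^2 < 2 * (s * r) + r^2"
    using assms(4) by simp
  show "(2 * (s * r) + 2 * s^2)^2 + (2 * (s * r) + r^2)^2 = (2 * (s * r) + r^2 + 2 * s^2)^2"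
    by (simp add: power2_eq_square algebra_simps)
next
  fix p :: nat
  assume p: "prime p \<and> p dvd 2 * (s * r) + 2 * s^2 \<and> p dvd 2 * (s * r) + r^2"
    and "p dvd 2 * (s * r) + r^2 + 2 * s^2"
  then have "p dvd 2 * s^2"
    by (simp add: dvd_add_right_iff)
  then have "p = 2 \<or> p dvd s"
    using p by (metis prime_dvd_mult_iff prime_dvd_power primes_dvd_imp_eq two_is_prime_nat)
  then have "p dvd 2 * (s * r)"
    by auto
  then have "p dvd r"
    using p prime_dvd_power by (auto simp: dvd_add_right_iff)
  with \<open>p = 2 \<or> p dvd s\<close> show False
    using p assms(2,3) coprime_iff_no_common_prime_nat by blast
qed

lemma idpt_leg_factorization:
  fixes a b c :: nat
  assumes "idpt a b c"
  shows "a^2 = (c - b) * (c + b)" "coprime (c - b) b" "0 < c - b" "a < b"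
proof -
  have "a < b" "b < c" "a^2 + b^2 = c^2"
    and primitive: "\<forall>p. prime p \<and> p dvd a \<and> p dvd b \<longrightarrow> \<not> p dvd c"
    using assms unfolding idpt_def dpt_def gcd_gcd_eq_1_iff_no_common_prime_nat by auto
  then show "a^2 = (c - b) * (c + b)" "0 < c - b" "a < b"
    by (auto simp: power2_eq_square algebra_simps diff_mult_distrib2)
  show "coprime (c - b) b"
    unfolding coprime_iff_no_common_prime_nat
  proof (intro allI impI notI)
    fix p :: nat
    assume p: "prime p \<and> p dvd c - b" and "p dvd b"
    then have "p dvd c"
      using \<open>b < c\<close> by (metis dvd_add le_add_diff_inverse less_imp_le)
    then have "p dvd a"
      using p \<open>a^2 = (c - b) * (c + b)\<close> prime_dvd_power by (metis dvd_mult2)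
    then show False
      using primitive p \<open>p dvd b\<close> \<open>p dvd c\<close> by blast
  qed
qed

lemma idpt_odd_difference_imp_family:
  fixes a b c :: nat
  assumes "idpt a b c" "odd (c - b)"
  obtains s r where "odd s" "coprime s r" "s^2 < 2 * r^2" "c - b = s^2"
    "a = 2 * (s * r) + s^2" "b = 2 * (s * r) + 2 * r^2"
proof -
  define d where "d = c - b"
  note legs = idpt_leg_factorization[OF assms(1), folded d_def]
  have cb: "c + b = d + 2 * b"
    using legs(3) by (simp add: d_def)
  have "coprime d (2 * b)"
    using legs(2) assms(2) by (simp flip: d_def)
  then have "coprime d (c + b)"
    by (simp add: cb coprime_add_self_right_nat)
  moreover have "d * (c + b) = a^2" "0 < c + b"
    using legs(1,3) cb by simp_all
  ultimately obtain s t where st: "d = s^2" "c + b = t^2" "a = s * t" "coprime s t"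
    using coprime_mult_eq_square_nat legs(3) by blast
  have "s^2 < t^2"
    using st legs(3,4) cb by simp
  then have "s < t"
    by (rule power_less_imp_less_base) simp
  have "odd s"
    using assms(2) st(1) by (simp flip: d_def)
  have "odd (t^2)"
    using \<open>odd s\<close> by (simp add: cb st(1) flip: st(2))
  then have "even (t - s)"
    using \<open>odd s\<close> \<open>s < t\<close> by (simp add: even_diff_nat)
  then obtain r where "t - s = 2 * r"
    by blast
  with \<open>s < t\<close> have t: "t = s + 2 * r"
    by simp
  have b: "b = 2 * (s * r) + 2 * r^2"
    using st(1,2) cb t by (simp add: power2_eq_square algebra_simps)
  have a: "a = 2 * (s * r) + s^2"
    using st(3) t by (simp add: power2_eq_square algebra_simps)
  have "coprime s r"
    using st(4) t \<open>odd s\<close> by (simp add: coprime_add_self_right_nat)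
  moreover have "s^2 < 2 * r^2"
    using legs(4) a b by simp
  ultimately show thesis
    using that[OF \<open>odd s\<close> _ _ _ a b] st(1) by (simp add: d_def)
qed

lemma idpt_even_difference_imp_family:
  fixes a b c :: nat
  assumes "idpt a b c" "even (c - b)"
  obtains s r where "0 < s" "odd r" "coprime s r" "2 * s^2 < r^2" "c - b = 2 * s^2"
    "a = 2 * (s * r) + 2 * s^2" "b = 2 * (s * r) + r^2"
proof -
  obtain e where e: "c - b = 2 * e"
    using assms(2) by blast
  note legs = idpt_leg_factorization[OF assms(1), unfolded e]
  have cb: "c + b = 2 * (e + b)"
    using legs(3) e by simp
  have "even (a^2)"
    using legs(1) by simp
  then obtain a' where a': "a = 2 * a'"
    by auto
  have "coprime e (e + b)"
    using legs(2) by (simp add: coprime_add_self_right_nat)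
  moreover have "e * (e + b) = a'^2"
    using legs(1) a' cb by (auto simp: power2_eq_square algebra_simps)
  moreover have "0 < e" "0 < e + b"
    using legs(3) by simp_all
  ultimately obtain s t where st: "e = s^2" "e + b = t^2" "a' = s * t" "coprime s t"
    using coprime_mult_eq_square_nat by blast
  have "0 < s"
    using st(1) \<open>0 < e\<close> by (cases s) auto
  have "s^2 < t^2"
    using st legs(4) a' by simp
  then have "s < t"
    by (rule power_less_imp_less_base) simp
  then obtain r where t: "t = s + r"
    using less_imp_add_positive by blast
  have b: "b = 2 * (s * r) + r^2"
    using st(1,2) t by (simp add: power2_eq_square algebra_simps)
  have a: "a = 2 * (s * r) + 2 * s^2"
    using a' st(3) t by (simp add: power2_eq_square algebra_simps)
  have "odd b"
    using legs(2) by simp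
  then have "odd r"
    using b by simp
  moreover have "coprime s r"
    using st(4) t by (simp add: coprime_add_self_right_nat)
  moreover have "2 * s^2 < r^2"
    using legs(4) a b by simp
  ultimately show thesis
    using that[OF \<open>0 < s\<close> _ _ _ _ a b] st(1) e by simp
qed

lemma idpt_of_admissible_rep:
  fixes d f s r :: nat
  assumes "admissible_rep d f s"
    and "int r \<ge> \<lceil>sqrt (real (f * d) / 2)\<rceil>"
    and "d > 1 \<longrightarrow> (\<forall>p. prime p \<and> p dvd d \<longrightarrow> \<not> p dvd r)"
  shows "idpt (2 * (s * r) + d) (2 * (s * r) + 2 * (s * r)^2 div d)
              (2 * (s * r) + 2 * (s * r)^2 div d + d)"
proof -
  have s: "0 < s" "d = f * s^2" "f = 1 \<and> odd s \<or> f = 2"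
    using assms(1) admissible_rep_iff by auto
  have bound: "f * d \<le> 2 * r^2"
    using assms(2) int_ge_ceiling_sqrt_half_iff by blast
  have "0 < d"
    using s by auto
  then have "coprime d r"
    using assms(3) coprime_iff_prime_divisors_not_dvd by blast
  from s(3) show ?thesis
  proof (elim disjE conjE)
    assume "f = 1" "odd s"
    moreover have "s^2 \<noteq> 2 * r^2"
      using \<open>odd s\<close> by (metis dvd_triv_left even_power)
    ultimately have "idpt (2 * (s * r) + s^2) (2 * (s * r) + 2 * r^2) (2 * (s * r) + 2 * r^2 + s^2)"
      using idpt_odd_family \<open>coprime d r\<close> bound s(2) by simp
    then show ?thesis
      using \<open>f = 1\<close> s(1,2) by (simp add: power_mult_distrib)
  next
    assume "f = 2"
    then have "odd r" "coprime s r"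
      using \<open>coprime d r\<close> s(2) by simp_all
    moreover have "r^2 \<noteq> 2 * s^2"
      using \<open>odd r\<close> by (metis dvd_triv_left even_power)
    ultimately have "idpt (2 * (s * r) + 2 * s^2) (2 * (s * r) + r^2) (2 * (s * r) + r^2 + 2 * s^2)"
      using idpt_even_family s(1) bound s(2) \<open>f = 2\<close> by simp
    then show ?thesis
      using \<open>f = 2\<close> s(1,2) by (simp add: power_mult_distrib)
  qed
qed

lemma admissible_rep_of_idpt:
  fixes a b c :: nat
  assumes "idpt a b c"
  shows "\<exists>f s r :: nat.
           admissible_rep (c - b) f s \<and> r > 0 \<and>
           int r \<ge> \<lceil>sqrt (real (f * (c - b)) / 2)\<rceil> \<and>
           (c - b > 1 \<longrightarrow> (\<forall>p. prime p \<and> p dvd (c - b) \<longrightarrow> \<not> p dvd r)) \<and>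
           a = 2 * (s * r) + (c - b) \<and>
           b = 2 * (s * r) + 2 * (s * r)^2 div (c - b) \<and>
           c = b + (c - b)"
proof -
  have "0 < c - b"
    using idpt_leg_factorization(3)[OF assms] .
  obtain f s r where param: "admissible_rep (c - b) f s" "coprime (c - b) r"
    "f * (c - b) < 2 * r^2" "a = 2 * (s * r) + (c - b)"
    "b = 2 * (s * r) + 2 * (s * r)^2 div (c - b)"
  proof (cases "odd (c - b)")
    case True
    then obtain s r where sr: "odd s" "coprime s r" "s^2 < 2 * r^2" "c - b = s^2"
      "a = 2 * (s * r) + s^2" "b = 2 * (s * r) + 2 * r^2"
      using idpt_odd_difference_imp_family assms by blast
    have "0 < s"
      using sr(1) by (cases s) auto
    then show thesis
      using that[of 1 s r] sr by (simp add: admissible_rep_iff power_mult_distrib)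
  next
    case False
    then obtain s r where sr: "0 < s" "odd r" "coprime s r" "2 * s^2 < r^2" "c - b = 2 * s^2"
      "a = 2 * (s * r) + 2 * s^2" "b = 2 * (s * r) + r^2"
      using idpt_even_difference_imp_family assms by blast
    then show thesis
      using that[of 2 s r] by (simp add: admissible_rep_iff power_mult_distrib)
  qed
  moreover have "0 < r"
    using param(3) by (cases r) auto
  moreover have "int r \<ge> \<lceil>sqrt (real (f * (c - b)) / 2)\<rceil>"
    unfolding int_ge_ceiling_sqrt_half_iff using param(3) by simp
  moreover have "c - b > 1 \<longrightarrow> (\<forall>p. prime p \<and> p dvd (c - b) \<longrightarrow> \<not> p dvd r)"
    unfolding coprime_iff_prime_divisors_not_dvd[OF \<open>0 < c - b\<close>] by (rule param(2))
  moreover have "c = b + (c - b)"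
    using \<open>0 < c - b\<close> by simp
  ultimately show ?thesis
    by blast
qed

theorem theorem5:
  shows "(\<forall>d f s r :: nat.
            admissible_rep d f s \<and> r > 0 \<and>
            int r \<ge> \<lceil>sqrt (real (f * d) / 2)\<rceil> \<and>
            (d > 1 \<longrightarrow> (\<forall>p. prime p \<and> p dvd d \<longrightarrow> \<not> p dvd r)) \<longrightarrow>
            idpt (2 * (s * r) + d)
                 (2 * (s * r) + 2 * (s * r)^2 div d)
                 (2 * (s * r) + 2 * (s * r)^2 div d + d))
       \<and>
         (\<forall>a b c :: nat. idpt a b c \<longrightarrow>
            (\<exists>f s r :: nat.
               admissible_rep (c - b) f s \<and> r > 0 \<and>
               int r \<ge> \<lceil>sqrt (real (f * (c - b)) / 2)\<rceil> \<and>
               (c - b > 1 \<longrightarrow> (\<forall>p. prime p \<and> p dvd (c - b) \<longrightarrow> \<not> p dvd r)) \<and>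
               a = 2 * (s * r) + (c - b) \<and>
               b = 2 * (s * r) + 2 * (s * r)^2 div (c - b) \<and>
               c = b + (c - b)))"
  using idpt_of_admissible_rep admissible_rep_of_idpt by blast

end
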